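(* The BSDE is stabilizable if and only if $S_0\subset\mathcal C$, where $S_0:=\{y\in\mathbb R^d: Ay=0\}$. Consequently: (i) if $\mathbb S$ consists of a single ergodic class ($m=1$), then the BSDE is stabilizable; (ii) if $\mathbb S=\bigcup_{k=1}^m\mathbb S_k$ is the partition into ergodic classes, then the BSDE is stabilizable if and only if $\mathsf 1_{\mathbb S_k}\in\mathcal C$ for all $k=1,\dots,m$.
   Context: Let $\mathbb S=\{1,\dots,d\}$. Functions on $\mathbb S$ are identified with vectors in $\mathbb R^d$; $\mathsf 1$ is the all-ones vector, $\mathsf 1_D$ the indicator of $D\subset\mathbb S$, and $gh$ the entrywise product. $A$ is the rate matrix of a continuous-time Markov chain on $\mathbb S$ (off-diagonal entries nonnegative, rows summing to zero). $\mathbb S=\bigcup_{k=1}^m\mathbb S_k$ is its partition into ergodic classes, each a closed irreducible class. $h\in\mathbb R^d$ is the observation function of the model $Z_t=\int_0^th(X_s)\,\mathrm ds+W_t$. The BSDE is $$-\mathrm dY_t=(AY_t+hU_t+hV_t)\,\mathrm dt-V_t\,\mathrm dZ_t$$ with admissible (observation-adapted, square-integrable) controls $U$. Its controllable subspace $\mathcal C$ is the set of $Y_0$ reachable from some deterministic terminal condition $Y_T=c\mathsf 1$ using some admissible control. Equivalently (by a known result), $\mathcal C$ is the smallest subspace of $\mathbb R^d$ containing $\mathsf 1$ and closed under $g\mapsto Ag$ and $g\mapsto gh$. Since $\mathcal C$ is $A$-invariant, $A$ induces a map $\bar A_{uc}$ on $\mathbb R^d/\mathcal C$; in an orthonormal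 basis adapted to $\mathcal C\oplus\mathcal C^\perp$, $A$ is block upper triangular and $\bar A_{uc}$ is its lower-right block. The BSDE is stabilizable if either $\mathcal C=\mathbb R^d$, or $\mathcal C\ne\mathbb R^d$ and $\bar A_{uc}$ is Hurwitz. *)

theory Defs
  imports "HOL-Analysis.Analysis"
begin

text \<open>States are the elements of a finite type 'n; functions on the state space are
  vectors in real^'n; the rate matrix is a real^'n^'n.  Entrywise product of vectors
  is the componentwise multiplication (*) on real^'n, and 1 is the all-ones vector.\<close>

definition rate_matrix :: "real^'n^'n \<Rightarrow> bool" where
  "rate_matrix A \<longleftrightarrow> (\<forall>i j. i \<noteq> j \<longrightarrow> A$i$j \<ge> 0) \<and> (\<forall>i. (\<Sum>j\<in>UNIV. A$i$j) = 0)"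

definition trans_rel :: "real^'n^'n \<Rightarrow> ('n \<times> 'n) set" where
  "trans_rel A = {(i,j). i \<noteq> j \<and> A$i$j > 0}"

definition ergodic_class :: "real^'n^'n \<Rightarrow> 'n set \<Rightarrow> bool" where
  "ergodic_class A K \<longleftrightarrow> K \<noteq> {}
     \<and> (\<forall>i\<in>K. \<forall>j. (i,j) \<in> trans_rel A \<longrightarrow> j \<in> K)
     \<and> (\<forall>i\<in>K. \<forall>j\<in>K. (i,j) \<in> (trans_rel A \<inter> (K \<times> K))\<^sup>*)"

definition ergodic_partition :: "real^'n^'n \<Rightarrow> 'n set set \<Rightarrow> bool" where
  "ergodic_partition A P \<longleftrightarrow> (\<forall>K\<in>P. ergodic_class A K) \<and> \<Union>P = UNIV
     \<and> (\<forall>K\<in>P. \<forall>L\<in>P. K \<noteq> L \<longrightarrow> K \<inter> L = {})"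

definition ctrl_space :: "real^'n^'n \<Rightarrow> real^'n \<Rightarrow> (real^'n) set" where
  "ctrl_space A h = \<Inter>{V. subspace V \<and> 1 \<in> V \<and> (\<forall>g\<in>V. A *v g \<in> V) \<and> (\<forall>g\<in>V. g * h \<in> V)}"

definition indic_vec :: "'n set \<Rightarrow> real^'n" where
  "indic_vec D = (\<chi> i. if i \<in> D then 1 else 0)"

definition cplx_sub :: "(real^'n) set \<Rightarrow> (complex^'n) set" where
  "cplx_sub C = {v. (\<chi> i. Re (v$i)) \<in> C \<and> (\<chi> i. Im (v$i)) \<in> C}"

definition cplx_mat :: "real^'n^'n \<Rightarrow> complex^'n^'n" where
  "cplx_mat A = (\<chi> i j. complex_of_real (A$i$j))"

text \<open>lambda is a (complex) eigenvalue of the map induced by A on the quotient R^d / C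
  (C assumed A-invariant), i.e. of the lower-right block A_uc.\<close>
definition quot_eigenvalue :: "real^'n^'n \<Rightarrow> (real^'n) set \<Rightarrow> complex \<Rightarrow> bool" where
  "quot_eigenvalue A C z \<longleftrightarrow>
     (\<exists>v. v \<notin> cplx_sub C \<and> cplx_mat A *v v - z *s v \<in> cplx_sub C)"

definition quot_hurwitz :: "real^'n^'n \<Rightarrow> (real^'n) set \<Rightarrow> bool" where
  "quot_hurwitz A C \<longleftrightarrow> (\<forall>z. quot_eigenvalue A C z \<longrightarrow> Re z < 0)"

definition stabilizable :: "real^'n^'n \<Rightarrow> real^'n \<Rightarrow> bool" where
  "stabilizable A h \<longleftrightarrow> ctrl_space A h = UNIV
     \<or> (ctrl_space A h \<noteq> UNIV \<and> quot_hurwitz A (ctrl_space A h))"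

end

theory Submission
  imports Defs
begin

text \<open>Since ctrl_space A h is A-invariant, stabilizability only fails through a quotient
  eigenvalue z with Re z \<ge> 0.  By Gershgorin's theorem every eigenvalue of a rate matrix
  lies in a disc {z. cmod (z + q) \<le> q}, so such a z must be 0; and 0 is a semisimple
  eigenvalue (A (A v) = 0 forces A v = 0, by the maximum principle on each ergodic class).
  Hence 0 is a quotient eigenvalue exactly when some y with A y = 0 lies outside the
  controllable subspace.  Finally, the maximum principle also shows that the kernel of A
  is spanned by the indicators of the ergodic classes.\<close>

lemma finite_obtains_maximizer:
  fixes f :: "'a \<Rightarrow> 'b::linorder"
  assumes "finite K" "K \<noteq> {}"
  obtains i where "i \<in> K" "\<forall>j\<in>K. f j \<le> f i"
proof -
  have "Max (f ` K) \<in> f ` K" using assms by simp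
  then obtain i where "i \<in> K" "f i = Max (f ` K)" by auto
  then show ?thesis using that assms by (metis Max_ge finite_imageI imageI)
qed

lemma linear_inj_on_invariant_subspace_onto:
  fixes f :: "'a::euclidean_space \<Rightarrow> 'a"
  assumes "linear f" "subspace S" "f ` S \<subseteq> S" "inj_on f S"
  shows "f ` S = S"
proof -
  have "dim (f ` S) = dim S"
    using dim_image_eq[OF assms(1)] assms(2,4) by (metis span_eq_iff)
  then show ?thesis
    using subspace_dim_equal[of "f ` S" S] linear_subspace_image[OF assms(1,2)] assms(2,3) by simp
qed

lemma ctrl_space_subspace: "subspace (ctrl_space A h)"
  unfolding ctrl_space_def by (rule subspace_Inter) auto

lemma one_in_ctrl_space: "1 \<in> ctrl_space A h"
  unfolding ctrl_space_def by auto

lemma ctrl_space_mult_vec: "g \<in> ctrl_space A h \<Longrightarrow> A *v g \<in> ctrl_space A h"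
  unfolding ctrl_space_def by auto

subsection \<open>Maximum principle for rate matrices\<close>

lemma rate_matrix_mult_vec_nth:
  assumes "rate_matrix A"
  shows "(A *v v)$i = (\<Sum>j\<in>UNIV. A$i$j * (v$j - v$i))"
proof -
  have "(\<Sum>j\<in>UNIV. A$i$j * (v$j - v$i)) = (\<Sum>j\<in>UNIV. A$i$j * v$j) - (\<Sum>j\<in>UNIV. A$i$j) * v$i"
    by (simp add: algebra_simps sum_subtractf sum_distrib_left sum_distrib_right)
  with assms show ?thesis
    unfolding rate_matrix_def by (simp add: matrix_vector_mult_def)
qed

lemma ergodic_class_entry_eq_0:
  assumes "rate_matrix A" "ergodic_class A K" "i \<in> K" "j \<notin> K"
  shows "A$i$j = 0"
proof -
  have "i \<noteq> j" using assms(3,4) by auto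
  then have "A$i$j \<ge> 0" using assms(1) unfolding rate_matrix_def by auto
  moreover have "\<not> A$i$j > 0"
    using assms(2-4) \<open>i \<noteq> j\<close> unfolding ergodic_class_def trans_rel_def by auto
  ultimately show ?thesis by simp
qed

lemma rate_matrix_term_nonpos_at_max:
  assumes "rate_matrix A" "ergodic_class A K" "i \<in> K" "\<forall>j\<in>K. v$j \<le> v$i"
  shows "A$i$j * (v$j - v$i) \<le> 0"
proof (cases "j \<in> K \<and> j \<noteq> i")
  case True
  then have "A$i$j \<ge> 0" using assms(1) unfolding rate_matrix_def by auto
  then show ?thesis using assms(4) True by (simp add: mult_nonneg_nonpos)
next
  case False
  then show ?thesis using ergodic_class_entry_eq_0[OF assms(1-3)] by auto
qed

lemma mult_vec_nth_nonpos_at_max: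
  assumes "rate_matrix A" "ergodic_class A K" "i \<in> K" "\<forall>j\<in>K. v$j \<le> v$i"
  shows "(A *v v)$i \<le> 0"
  unfolding rate_matrix_mult_vec_nth[OF assms(1)]
  by (rule sum_nonpos) (use rate_matrix_term_nonpos_at_max[OF assms] in auto)

lemma harmonic_at_max_propagates:
  assumes "rate_matrix A" "ergodic_class A K" "i \<in> K" "\<forall>j\<in>K. v$j \<le> v$i"
    and "(A *v v)$i = 0" and "(i,j) \<in> trans_rel A"
  shows "v$j = v$i"
proof -
  have "(\<Sum>j\<in>UNIV. - (A$i$j * (v$j - v$i))) = 0"
    using assms(5) unfolding rate_matrix_mult_vec_nth[OF assms(1)] by (simp add: sum_negf)
  then have "A$i$j * (v$j - v$i) = 0"
    using sum_nonneg_eq_0_iff[of UNIV "\<lambda>j. - (A$i$j * (v$j - v$i))"]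
      rate_matrix_term_nonpos_at_max[OF assms(1-4)] by auto
  moreover have "A$i$j > 0" using assms(6) unfolding trans_rel_def by auto
  ultimately show ?thesis by simp
qed

lemma harmonic_const_on_ergodic_class:
  assumes "rate_matrix A" "ergodic_class A K" "A *v w = 0" "i \<in> K" "j \<in> K"
  shows "w$i = w$j"
proof -
  obtain m where m: "m \<in> K" "\<forall>j\<in>K. w$j \<le> w$m"
    using finite_obtains_maximizer[of K "\<lambda>j. w$j"] assms(2) unfolding ergodic_class_def by auto
  have max_reach: "w$k = w$m" if "(m,k) \<in> (trans_rel A \<inter> K \<times> K)\<^sup>*" for k
    using that
  proof (induction rule: rtrancl_induct)
    case (step y z)
    then have "y \<in> K" "\<forall>j\<in>K. w$j \<le> w$y" "(A *v w)$y = 0" "(y,z) \<in> trans_rel A"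
      using m assms(3) by auto
    then have "w$z = w$y" by (rule harmonic_at_max_propagates[OF assms(1,2)])
    then show ?case using step.IH by simp
  qed simp
  have "w$i = w$m" "w$j = w$m"
    using max_reach assms(2,4,5) m(1) unfolding ergodic_class_def by blast+
  then show ?thesis by simp
qed

lemma ergodic_partition_obtains_class:
  assumes "ergodic_partition A P"
  obtains K where "K \<in> P" "ergodic_class A K" "i \<in> K"
  using assms unfolding ergodic_partition_def by blast

text \<open>The harmonic function A v is constant on each class, and the maximum principle
  applied to v and to -v forces that constant to be both \<le> 0 and \<ge> 0.\<close>
lemma rate_matrix_kernel_of_square:
  assumes "rate_matrix A" "ergodic_partition A P" "A *v (A *v v) = 0"
  shows "A *v v = 0"
proof -
  have "(A *v v)$i = 0" for i
  proof -
    obtain K where K: "K \<in> P" "ergodic_class A K" "i \<in> K"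
      using ergodic_partition_obtains_class[OF assms(2)] .
    then have ne: "K \<noteq> {}" by auto
    obtain a where a: "a \<in> K" "\<forall>j\<in>K. v$j \<le> v$a"
      using finite_obtains_maximizer[of K "\<lambda>j. v$j"] ne by auto
    obtain b where b: "b \<in> K" "\<forall>j\<in>K. (-v)$j \<le> (-v)$b"
      using finite_obtains_maximizer[of K "\<lambda>j. (-v)$j"] ne by auto
    have "(A *v v)$a \<le> 0" using mult_vec_nth_nonpos_at_max[OF assms(1) K(2) a] .
    moreover have "(A *v (-v))$b \<le> 0" using mult_vec_nth_nonpos_at_max[OF assms(1) K(2) b] .
    then have "(A *v v)$b \<ge> 0" by (simp add: matrix_vector_mult_def sum_negf)
    moreover have "(A *v v)$i = (A *v v)$a" "(A *v v)$i = (A *v v)$b"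
      using harmonic_const_on_ergodic_class[OF assms(1) K(2) assms(3) K(3)] a(1) b(1) by blast+
    ultimately show ?thesis by linarith
  qed
  then show ?thesis by (simp add: vec_eq_iff)
qed

subsection \<open>The kernel of a rate matrix\<close>

lemma mult_vec_indic_ergodic_class:
  assumes "rate_matrix A" "ergodic_partition A P" "K \<in> P"
  shows "A *v indic_vec K = 0"
proof -
  have "(A *v indic_vec K)$i = 0" for i
  proof -
    obtain L where L: "L \<in> P" "ergodic_class A L" "i \<in> L"
      using ergodic_partition_obtains_class[OF assms(2)] .
    show ?thesis
    proof (cases "L = K")
      case True
      then have "\<forall>j\<in>L. (indic_vec K)$j \<le> (indic_vec K)$i"
          "\<forall>j\<in>L. (-indic_vec K)$j \<le> (-indic_vec K)$i"
        using L by (auto simp: indic_vec_def)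
      from this[THEN mult_vec_nth_nonpos_at_max[OF assms(1) L(2,3)]]
      show ?thesis by (simp add: matrix_vector_mult_def sum_negf)
    next
      case False
      then have "L \<inter> K = {}" using assms(2,3) L(1) unfolding ergodic_partition_def by auto
      then have "A$i$j * (indic_vec K)$j = 0" for j
        using ergodic_class_entry_eq_0[OF assms(1) L(2,3), of j] by (auto simp: indic_vec_def)
      then show ?thesis by (simp add: matrix_vector_mult_def sum.neutral)
    qed
  qed
  then show ?thesis by (simp add: vec_eq_iff)
qed

lemma kernel_eq_sum_indic_vec:
  assumes "rate_matrix A" "ergodic_partition A P" "A *v y = 0"
  shows "y = (\<Sum>K\<in>P. y$(SOME j. j \<in> K) *\<^sub>R indic_vec K)"
proof -
  have "y$i = (\<Sum>K\<in>P. y$(SOME j. j \<in> K) *\<^sub>R indic_vec K)$i" for i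
  proof -
    obtain L where L: "L \<in> P" "ergodic_class A L" "i \<in> L"
      using ergodic_partition_obtains_class[OF assms(2)] .
    have "i \<notin> K" if "K \<in> P" "K \<noteq> L" for K
      using assms(2) L(1,3) that unfolding ergodic_partition_def by blast
    then have "(\<Sum>K\<in>P. y$(SOME j. j \<in> K) *\<^sub>R indic_vec K)$i
        = (\<Sum>K\<in>P. if K = L then y$(SOME j. j \<in> K) else 0)"
      unfolding sum_component using L(3) by (intro sum.cong) (auto simp: indic_vec_def)
    also have "\<dots> = y$(SOME j. j \<in> L)" using L(1) by simp
    also have "\<dots> = y$i"
      using harmonic_const_on_ergodic_class[OF assms(1) L(2) assms(3)] L(3) by (metis someI)
    finally show ?thesis by (rule sym)
  qed
  then show ?thesis unfolding vec_eq_iff by blast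
qed

lemma kernel_subset_iff_indic_vec:
  assumes "rate_matrix A" "ergodic_partition A P" "subspace C"
  shows "{y. A *v y = 0} \<subseteq> C \<longleftrightarrow> (\<forall>K\<in>P. indic_vec K \<in> C)"
proof
  assume "{y. A *v y = 0} \<subseteq> C"
  then show "\<forall>K\<in>P. indic_vec K \<in> C"
    using mult_vec_indic_ergodic_class[OF assms(1,2)] by blast
next
  assume indic: "\<forall>K\<in>P. indic_vec K \<in> C"
  show "{y. A *v y = 0} \<subseteq> C"
  proof
    fix y assume "y \<in> {y. A *v y = 0}"
    then have "y = (\<Sum>K\<in>P. y$(SOME j. j \<in> K) *\<^sub>R indic_vec K)"
      by (intro kernel_eq_sum_indic_vec[OF assms(1,2)]) simp
    also have "\<dots> \<in> C"
      using indic by (intro subspace_sum[OF assms(3)] subspace_scale[OF assms(3)]) auto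
    finally show "y \<in> C" .
  qed
qed

text \<open>A is injective on its range, by semisimplicity of the eigenvalue 0, hence maps
  range A \<inter> C onto itself; so A v = A c for some c \<in> C, and v - c lies in the kernel.\<close>
lemma mem_if_mult_vec_mem:
  assumes "rate_matrix A" "ergodic_partition A P" "subspace C"
    and inv: "\<And>g. g \<in> C \<Longrightarrow> A *v g \<in> C" and ker: "{y. A *v y = 0} \<subseteq> C"
    and "A *v v \<in> C"
  shows "v \<in> C"
proof -
  define R where "R = range ((*v) A) \<inter> C"
  have lin: "linear ((*v) A)" by simp
  have "subspace R" unfolding R_def
    by (rule subspace_inter[OF linear_subspace_image[OF lin subspace_UNIV] assms(3)])
  moreover have "(*v) A ` R \<subseteq> R" unfolding R_def using inv by blast
  moreover have "inj_on ((*v) A) R"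
  proof (rule inj_onI)
    fix x y assume "x \<in> R" "y \<in> R" "A *v x = A *v y"
    then obtain x' y' where "x = A *v x'" "y = A *v y'" "A *v (A *v (x' - y')) = 0"
      unfolding R_def by (auto simp: matrix_vector_mult_diff_distrib)
    then show "x = y"
      using rate_matrix_kernel_of_square[OF assms(1,2), of "x' - y'"]
      by (simp add: matrix_vector_mult_diff_distrib)
  qed
  ultimately have "(*v) A ` R = R" by (rule linear_inj_on_invariant_subspace_onto[OF lin])
  moreover have "A *v v \<in> R" unfolding R_def using assms(6) by blast
  ultimately obtain c where c: "c \<in> R" "A *v (v - c) = 0"
    by (metis imageE right_minus_eq matrix_vector_mult_diff_distrib)
  then have "(v - c) + c \<in> C" using ker subspace_add[OF assms(3)] unfolding R_def by blast
  then show ?thesis by simp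
qed

subsection \<open>Complex eigenvalues\<close>

definition Re_vec :: "complex^'n \<Rightarrow> real^'n" where "Re_vec v = (\<chi> i. Re (v$i))"
definition Im_vec :: "complex^'n \<Rightarrow> real^'n" where "Im_vec v = (\<chi> i. Im (v$i))"

lemma cplx_sub_eq: "cplx_sub C = Re_vec -` C \<inter> Im_vec -` C"
  unfolding cplx_sub_def Re_vec_def Im_vec_def by auto

lemma linear_Re_vec: "linear Re_vec"
  by (rule linearI) (simp_all add: Re_vec_def vec_eq_iff)

lemma linear_Im_vec: "linear Im_vec"
  by (rule linearI) (simp_all add: Im_vec_def vec_eq_iff)

lemma subspace_cplx_sub: "subspace C \<Longrightarrow> subspace (cplx_sub C)"
  unfolding cplx_sub_eq
  by (intro subspace_inter linear_subspace_vimage linear_Re_vec linear_Im_vec)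

lemma Re_vec_cplx_mat: "Re_vec (cplx_mat A *v v) = A *v Re_vec v"
  by (simp add: vec_eq_iff Re_vec_def cplx_mat_def matrix_vector_mult_def)

lemma Im_vec_cplx_mat: "Im_vec (cplx_mat A *v v) = A *v Im_vec v"
  by (simp add: vec_eq_iff Im_vec_def cplx_mat_def matrix_vector_mult_def)

lemma cplx_sub_shifted_invariant:
  assumes "subspace C" "\<And>g. g \<in> C \<Longrightarrow> A *v g \<in> C" "u \<in> cplx_sub C"
  shows "cplx_mat A *v u - z *s u \<in> cplx_sub C"
proof -
  have "Re_vec u \<in> C" "Im_vec u \<in> C" using assms(3) unfolding cplx_sub_eq by auto
  moreover have "Re_vec (cplx_mat A *v u - z *s u)
      = A *v Re_vec u - (Re z *\<^sub>R Re_vec u - Im z *\<^sub>R Im_vec u)"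
    "Im_vec (cplx_mat A *v u - z *s u) = A *v Im_vec u - (Re z *\<^sub>R Im_vec u + Im z *\<^sub>R Re_vec u)"
    by (simp_all add: vec_eq_iff Re_vec_def Im_vec_def cplx_mat_def matrix_vector_mult_def)
  ultimately show ?thesis
    unfolding cplx_sub_eq
    by (auto intro!: subspace_diff[OF assms(1)] subspace_add[OF assms(1)]
        subspace_scale[OF assms(1)] assms(2))
qed

lemma Re_nonneg_in_left_disc_eq_0:
  fixes z :: complex and q :: real
  assumes "cmod (z + of_real q) \<le> q" "Re z \<ge> 0"
  shows "z = 0"
proof -
  have "q \<ge> 0" using assms(1) norm_ge_zero order_trans by blast
  with assms have "(Re z + q)\<^sup>2 + (Im z)\<^sup>2 \<le> q\<^sup>2"
    by (metis cmod_power2 plus_complex.sel(1,2) Re_complex_of_real Im_complex_of_real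
        add_0_right power_mono norm_ge_zero)
  then have "(Re z)\<^sup>2 + (Im z)\<^sup>2 \<le> 0"
    using \<open>q \<ge> 0\<close> assms(2) by (simp add: power2_eq_square algebra_simps)
      (smt (verit) mult_nonneg_nonneg)
  then show ?thesis by (simp add: complex_eq_iff sum_power2_le_zero_iff)
qed

lemma rate_matrix_eigenvalue_in_disc:
  assumes "rate_matrix A" "cplx_mat A *v v = z *s v"
    and "v$i \<noteq> 0" "\<forall>j. cmod (v$j) \<le> cmod (v$i)"
  shows "cmod (z - A$i$i) \<le> - A$i$i"
proof -
  let ?O = "UNIV - {i}"
  have nn: "A$i$j \<ge> 0" if "j \<in> ?O" for j using assms(1) that unfolding rate_matrix_def by auto
  have "(\<Sum>j\<in>UNIV. A$i$j) = 0" using assms(1) unfolding rate_matrix_def by auto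
  then have row: "(\<Sum>j\<in>?O. A$i$j) = - A$i$i" using sum.remove[of UNIV i "\<lambda>j. A$i$j"] by simp
  have "(\<Sum>j\<in>UNIV. complex_of_real (A$i$j) * v$j) = z * v$i"
    using arg_cong[OF assms(2), of "\<lambda>w. w$i"] by (simp add: matrix_vector_mult_def cplx_mat_def)
  then have "(z - A$i$i) * v$i = (\<Sum>j\<in>?O. complex_of_real (A$i$j) * v$j)"
    by (simp add: sum.remove[of UNIV i] algebra_simps)
  then have "cmod (z - A$i$i) * cmod (v$i) \<le> (\<Sum>j\<in>?O. cmod (complex_of_real (A$i$j) * v$j))"
    by (metis norm_mult norm_sum)
  also have "\<dots> \<le> (\<Sum>j\<in>?O. A$i$j * cmod (v$i))"
    using nn assms(4) by (intro sum_mono) (simp add: norm_mult mult_left_mono)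
  also have "\<dots> = - A$i$i * cmod (v$i)" by (simp add: row sum_distrib_right[symmetric])
  finally show ?thesis
    using assms(3) by (metis mult_le_cancel_right_pos zero_less_norm_iff)
qed

lemma rate_matrix_eigenvector_eq_0:
  fixes A :: "real^'n^'n"
  assumes "rate_matrix A" "cplx_mat A *v v = z *s v" "Re z \<ge> 0" "z \<noteq> 0"
  shows "v = 0"
proof (rule ccontr)
  assume "v \<noteq> 0"
  obtain i where i: "\<forall>j. cmod (v$j) \<le> cmod (v$i)"
    using finite_obtains_maximizer[of "UNIV::'n set" "\<lambda>j. cmod (v$j)"] by auto
  have "v$i \<noteq> 0"
  proof
    assume "v$i = 0"
    then have "v$j = 0" for j using i by (metis norm_le_zero_iff norm_zero)
    then show False using \<open>v \<noteq> 0\<close> by (simp add: vec_eq_iff)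
  qed
  then have "cmod (z + complex_of_real (- A$i$i)) \<le> - A$i$i"
    using rate_matrix_eigenvalue_in_disc[OF assms(1,2) _ i] by simp
  then show False using Re_nonneg_in_left_disc_eq_0 assms(3,4) by blast
qed

lemma quot_eigenvalue_Re_neg:
  assumes "rate_matrix A" "ergodic_partition A P" "subspace C"
    and inv: "\<And>g. g \<in> C \<Longrightarrow> A *v g \<in> C" and ker: "{y. A *v y = 0} \<subseteq> C"
    and "quot_eigenvalue A C z"
  shows "Re z < 0"
proof (rule ccontr)
  assume "\<not> Re z < 0"
  obtain v where v: "v \<notin> cplx_sub C" "cplx_mat A *v v - z *s v \<in> cplx_sub C"
    using assms(6) unfolding quot_eigenvalue_def by blast
  show False
  proof (cases "z = 0")
    case True
    then have "A *v Re_vec v \<in> C" "A *v Im_vec v \<in> C"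
      using v(2) by (simp_all add: cplx_sub_eq Re_vec_cplx_mat Im_vec_cplx_mat)
    then show False
      using v(1) mem_if_mult_vec_mem[OF assms(1-3) inv ker] unfolding cplx_sub_eq by blast
  next
    case False
    define f where "f u = cplx_mat A *v u - z *s u" for u
    have lin: "linear f"
      unfolding f_def
      by (intro linear_compose_sub matrix_vector_mul_linear, rule linearI)
        (simp_all add: vec_eq_iff algebra_simps)
    have "inj f"
    proof (rule injI)
      fix x y assume "f x = f y"
      then have "cplx_mat A *v (x - y) = z *s (x - y)"
        unfolding f_def by (simp add: vec_eq_iff algebra_simps)
      then show "x = y"
        using rate_matrix_eigenvector_eq_0[OF assms(1)] \<open>\<not> Re z < 0\<close> False by fastforce
    qed
    have "f ` cplx_sub C = cplx_sub C"
      using cplx_sub_shifted_invariant[OF assms(3) inv] inj_on_subset[OF \<open>inj f\<close>]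
      by (intro linear_inj_on_invariant_subspace_onto[OF lin subspace_cplx_sub[OF assms(3)]])
        (auto simp: f_def)
    then have "f v \<in> f ` cplx_sub C" using v(2) unfolding f_def by simp
    then show False using v(1) \<open>inj f\<close> by (auto dest: injD)
  qed
qed

lemma quot_eigenvalue_0_if_kernel_not_subset:
  assumes "subspace C" "A *v y = 0" "y \<notin> C"
  shows "quot_eigenvalue A C 0"
proof -
  define v where "v = (\<chi> i. complex_of_real (y$i))"
  have "Re_vec v = y" "Im_vec v = 0"
    unfolding v_def Re_vec_def Im_vec_def by (simp_all add: vec_eq_iff)
  then have "v \<notin> cplx_sub C" "cplx_mat A *v v - 0 *s v \<in> cplx_sub C"
    using assms subspace_0 by (auto simp: cplx_sub_eq Re_vec_cplx_mat Im_vec_cplx_mat)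
  then show ?thesis unfolding quot_eigenvalue_def by blast
qed

lemma stabilizable_iff_kernel_subset:
  assumes "rate_matrix A" "ergodic_partition A P"
  shows "stabilizable A h \<longleftrightarrow> {y. A *v y = 0} \<subseteq> ctrl_space A h"
proof
  assume "stabilizable A h"
  then show "{y. A *v y = 0} \<subseteq> ctrl_space A h"
    using quot_eigenvalue_0_if_kernel_not_subset[OF ctrl_space_subspace]
    unfolding stabilizable_def quot_hurwitz_def by fastforce
next
  assume "{y. A *v y = 0} \<subseteq> ctrl_space A h"
  then have "quot_hurwitz A (ctrl_space A h)"
    unfolding quot_hurwitz_def
    using quot_eigenvalue_Re_neg[OF assms ctrl_space_subspace ctrl_space_mult_vec] by blast
  then show "stabilizable A h" unfolding stabilizable_def by blast
qed

theorem proposition2: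
  fixes A :: "real^'n^'n" and h :: "real^'n" and P :: "'n set set"
  assumes "rate_matrix A" and "ergodic_partition A P"
  shows "(stabilizable A h \<longleftrightarrow> {y. A *v y = 0} \<subseteq> ctrl_space A h)
     \<and> (card P = 1 \<longrightarrow> stabilizable A h)
     \<and> (stabilizable A h \<longleftrightarrow> (\<forall>K\<in>P. indic_vec K \<in> ctrl_space A h))"
proof -
  note stab = stabilizable_iff_kernel_subset[OF assms]
  note indic = kernel_subset_iff_indic_vec[OF assms ctrl_space_subspace]
  have "card P = 1 \<longrightarrow> stabilizable A h"
  proof
    assume "card P = 1"
    then obtain K where "P = {K}" by (auto simp: card_Suc_eq)
    moreover have "K = UNIV" using assms(2) \<open>P = {K}\<close> unfolding ergodic_partition_def by auto
    ultimately show "stabilizable A h"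
      using stab indic one_in_ctrl_space by (simp add: indic_vec_def one_vec_def)
  qed
  then show ?thesis using stab indic by simp
qed

end
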